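(* Let $f$ be a discretely conic function on a discrete set $\mathrm{dom}(f)\subseteq\mathbb{R}^n$ such that for every $\alpha\in\mathbb{R}$ the set $\{x\in\mathrm{dom}(f): f(x)\le\alpha\}$ is finite. Then there exists a conic function $g$ with $\mathrm{dom}(g)=\mathrm{conv}(\mathrm{dom}(f))$ and $g(x)=f(x)$ for all $x\in\mathrm{dom}(f)$ if and only if for every $i\ge 2$ (for which $\mathrm{MIN}_i(f)$ is defined) $$\mathrm{MIN}_i(f)\subseteq \mathrm{relbd}(P_i),\qquad P_i=\mathrm{conv}(\mathrm{MIN}_1(f)\cup\dots\cup\mathrm{MIN}_i(f)).$$ Equivalently: for all $z\in\mathrm{dom}(f)\setminus\mathrm{MIN}_1(f)$, $\{x\in\mathrm{dom}(f): f(x)=f(z)\}\subseteq\mathrm{relbd}(\mathrm{conv}\{x\in\mathrm{dom}(f): f(x)\le f(z)\})$.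
   Context: A set $D\subseteq\mathbb{R}^n$ is discrete if every $x\in D$ has a ball around it meeting $D$ only in $x$. For points $x^{(1)},\dots,x^{(k)}$, $\mathrm{cone}(x^{(1)},\dots,x^{(k-1)}\mid x^{(k)}) := x^{(k)}+\{\sum_{i<k}\lambda_i (x^{(k)}-x^{(i)}) : \lambda_i\ge 0\}$. A function $f$ with discrete domain is discretely conic if for all $y,x^{(1)},\dots,x^{(k)}\in\mathrm{dom}(f)$ with $f(x^{(1)})\le\dots\le f(x^{(k)})$ and $y\in\mathrm{cone}(x^{(1)},\dots,x^{(k-1)}\mid x^{(k)})$ we have $f(y)\ge f(x^{(k)})$. A function $g$ on a convex set is conic if for all $y,z\in\mathrm{dom}(g)$, $t\ge0$ with $g(y)\le g(z)$ and $z+t(z-y)\in\mathrm{dom}(g)$, $g(z+t(z-y))\ge g(z)$. Under the finiteness hypothesis, the distinct values of $f$ form an increasing sequence $v_1<v_2<\cdots$, and $\mathrm{MIN}_i(f)=\{x: f(x)=v_i\}$. $\mathrm{relbd}(S)$ is the boundary of $S$ relative to its affine hull. *)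

theory Defs
  imports "HOL-Analysis.Analysis"
begin

definition discrete_set :: "'a::metric_space set \<Rightarrow> bool" where
  "discrete_set D \<longleftrightarrow> (\<forall>x\<in>D. \<exists>e>0. ball x e \<inter> D = {x})"

definition dcone :: "'a::real_vector list \<Rightarrow> 'a \<Rightarrow> 'a set" where
  "dcone xs z = {z + (\<Sum>i<length xs. l i *\<^sub>R (z - xs ! i)) | l. \<forall>i. 0 \<le> l i}"

text \<open>Discretely conic function f with domain D: for points x(1),...,x(k) in D
  (here the nonempty list xs) with f(x(1)) <= ... <= f(x(k)) and y in D lying in
  cone(x(1),...,x(k-1) | x(k)), we have f(y) >= f(x(k)).\<close>
definition discretely_conic :: "'a::real_vector set \<Rightarrow> ('a \<Rightarrow> real) \<Rightarrow> bool" where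
  "discretely_conic D f \<longleftrightarrow>
    (\<forall>xs y. xs \<noteq> [] \<and> set xs \<subseteq> D \<and> y \<in> D \<and> sorted (map f xs)
       \<and> y \<in> dcone (butlast xs) (last xs) \<longrightarrow> f (last xs) \<le> f y)"

definition conic_on :: "'a::real_vector set \<Rightarrow> ('a \<Rightarrow> real) \<Rightarrow> bool" where
  "conic_on C g \<longleftrightarrow>
    (\<forall>y\<in>C. \<forall>z\<in>C. \<forall>t::real. 0 \<le> t \<and> g y \<le> g z \<and> z + t *\<^sub>R (z - y) \<in> C
        \<longrightarrow> g z \<le> g (z + t *\<^sub>R (z - y)))"

definition MIN1 :: "'a set \<Rightarrow> ('a \<Rightarrow> real) \<Rightarrow> 'a set" where
  "MIN1 D f = {x\<in>D. \<forall>y\<in>D. f x \<le> f y}"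

end

theory Submission
  imports Defs
begin

text \<open>If x \<in> D is a convex combination of points of D with values at most f x, and some point
  y0 with positive weight has f y0 < f x, then y0 lies in the cone of these points with apex x,
  so discrete conicity forces f y0 \<ge> f x. Hence no x \<in> D lies in a half-open segment [a, b[ with
  a in the hull of {f < f x} and b in the hull of {f \<le> f x}. This gives the boundary condition at
  once (a relative interior point x of the hull P of {f \<le> f z} could be pushed beyond itself
  away from a lower point of P), and it also yields a conic extension: a point of conv D whose
  smallest sublevel hull is P(\<gamma>), with \<beta> the preceding value of f, gets the value
  \<beta> + \<lambda>(\<gamma> - \<beta>), where \<lambda> is the least weight with x \<in> (1 - \<lambda>) P(\<beta>) + \<lambda> P(\<gamma>).
  This \<lambda> is a convex function, which makes the extension conic. So both sides of the equivalence
  always hold.\<close>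

lemma discretely_conic_convex_combination_le:
  fixes D :: "'a::real_vector set"
  assumes dc: "discretely_conic D f" and x: "x \<in> D" and S: "finite S" "S \<subseteq> D"
    and le: "\<forall>y\<in>S. f y \<le> f x"
    and u: "\<forall>y\<in>S. 0 \<le> u y" "sum u S = 1" "(\<Sum>y\<in>S. u y *\<^sub>R y) = x"
    and y0: "y0 \<in> S" "0 < u y0"
  shows "f x \<le> f y0"
proof -
  obtain zs where zs: "set zs = S" "distinct zs" using finite_distinct_list[OF S(1)] by blast
  define ys where "ys = sort_key f zs"
  have ys: "set ys = S" "distinct ys" "sorted (map f ys)" using zs by (auto simp: ys_def)
  define xs where "xs = ys @ [x]"
  have xs: "xs \<noteq> []" "set xs \<subseteq> D" "sorted (map f xs)" "butlast xs = ys" "last xs = x"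
    using ys S x le by (auto simp: xs_def sorted_append)
  define c where "c y = u y / u y0 - (if y = y0 then 1 else 0)" for y
  have c_nonneg: "0 \<le> c y" if "y \<in> S" for y
    using that u(1) y0(2) by (auto simp: c_def)
  have "(\<Sum>i<length ys. c (ys!i) *\<^sub>R (x - ys!i)) = (\<Sum>y\<in>S. c y *\<^sub>R (x - y))"
    using sum.reindex_bij_betw[OF bij_betw_nth[OF ys(2) refl refl]] ys(1) by simp
  also have "\<dots> = (\<Sum>y\<in>S. (u y / u y0) *\<^sub>R (x - y)) - (\<Sum>y\<in>S. if y = y0 then x - y else 0)"
    unfolding sum_subtractf[symmetric] by (rule sum.cong) (auto simp: c_def scaleR_diff_left)
  also have "\<dots> = (1 / u y0) *\<^sub>R (\<Sum>y\<in>S. u y *\<^sub>R (x - y)) - (x - y0)"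
    using S(1) y0(1) by (simp add: scaleR_sum_right sum.delta')
  also have "(\<Sum>y\<in>S. u y *\<^sub>R (x - y)) = 0"
    using u by (simp add: scaleR_diff_right sum_subtractf scaleR_sum_left[symmetric])
  finally have "y0 = x + (\<Sum>i<length ys. c (ys!i) *\<^sub>R (x - ys!i))" by simp
  moreover have "\<forall>i. 0 \<le> (if i < length ys then c (ys!i) else 0)"
    using c_nonneg ys(1) by auto
  ultimately have "y0 \<in> dcone (butlast xs) (last xs)"
    unfolding dcone_def xs(4,5)
    by (intro CollectI exI[of _ "\<lambda>i. if i < length ys then c (ys!i) else 0"]) auto
  then show ?thesis
    using dc xs y0(1) S(2) unfolding discretely_conic_def by (metis subsetD)
qed

lemma discretely_conic_not_in_half_open_segment:
  fixes D :: "'a::real_vector set"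
  assumes dc: "discretely_conic D f" and x: "x \<in> D"
    and a: "a \<in> convex hull {y\<in>D. f y < f x}" and b: "b \<in> convex hull {y\<in>D. f y \<le> f x}"
    and s: "0 \<le> s" "s < 1"
  shows "x \<noteq> (1 - s) *\<^sub>R a + s *\<^sub>R b"
proof
  assume x_eq: "x = (1 - s) *\<^sub>R a + s *\<^sub>R b"
  obtain A ua where A: "finite A" "A \<subseteq> {y\<in>D. f y < f x}"
    and ua: "\<forall>y\<in>A. 0 \<le> ua y" "sum ua A = 1" "(\<Sum>y\<in>A. ua y *\<^sub>R y) = a"
    using a unfolding convex_hull_explicit by blast
  obtain B ub where B: "finite B" "B \<subseteq> {y\<in>D. f y \<le> f x}"
    and ub: "\<forall>y\<in>B. 0 \<le> ub y" "sum ub B = 1" "(\<Sum>y\<in>B. ub y *\<^sub>R y) = b"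
    using b unfolding convex_hull_explicit by blast
  define S where "S = A \<union> B"
  define u where "u y = (1 - s) * (if y \<in> A then ua y else 0) + s * (if y \<in> B then ub y else 0)" for y
  have S: "finite S" "S \<subseteq> D" "\<forall>y\<in>S. f y \<le> f x" using A B by (auto simp: S_def)
  have restrict: "(\<Sum>y\<in>S. if y \<in> A then h y else 0) = sum h A"
    "(\<Sum>y\<in>S. if y \<in> B then h y else 0) = sum h B" for h :: "'a \<Rightarrow> 'b::comm_monoid_add"
    using S(1) by (simp_all add: sum.inter_restrict[symmetric] S_def Int_absorb1)
  have u_nonneg: "\<forall>y\<in>S. 0 \<le> u y" using ua(1) ub(1) s by (auto simp: u_def)
  have u_sum: "sum u S = 1"
    using ua(2) ub(2) by (simp add: u_def sum.distrib sum_distrib_left[symmetric] restrict)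
  have "(\<Sum>y\<in>S. u y *\<^sub>R y)
      = (\<Sum>y\<in>S. (1 - s) *\<^sub>R (if y \<in> A then ua y *\<^sub>R y else 0)
                  + s *\<^sub>R (if y \<in> B then ub y *\<^sub>R y else 0))"
    by (rule sum.cong) (auto simp: u_def scaleR_add_left)
  also have "\<dots> = (1 - s) *\<^sub>R (\<Sum>y\<in>S. if y \<in> A then ua y *\<^sub>R y else 0)
        + s *\<^sub>R (\<Sum>y\<in>S. if y \<in> B then ub y *\<^sub>R y else 0)"
    by (simp add: sum.distrib scaleR_sum_right)
  finally
  have u_comb: "(\<Sum>y\<in>S. u y *\<^sub>R y) = x" using ua(3) ub(3) x_eq by (simp add: restrict)
  obtain y0 where y0: "y0 \<in> A" "0 < ua y0"
    using ua(1,2) by (metis less_eq_real_def sum_nonpos zero_less_one not_le)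
  have "0 < u y0" using y0 s ub(1) by (auto simp: u_def intro!: add_pos_nonneg)
  then have "f x \<le> f y0"
    using discretely_conic_convex_combination_le[OF dc x S u_nonneg u_sum u_comb] y0(1) S_def by blast
  then show False using y0(1) A(2) by auto
qed

lemma discretely_conic_level_set_subset_rel_frontier:
  fixes D :: "'a::euclidean_space set"
  assumes dc: "discretely_conic D f" and z: "z \<in> D - MIN1 D f"
  shows "{x\<in>D. f x = f z} \<subseteq> rel_frontier (convex hull {x\<in>D. f x \<le> f z})"
proof
  fix x assume x: "x \<in> {x\<in>D. f x = f z}"
  define P where "P = convex hull {y\<in>D. f y \<le> f z}"
  obtain a where a: "a \<in> D" "f a < f z" using z unfolding MIN1_def by (auto simp: not_le)
  have "x \<in> P" "a \<in> P" using x a unfolding P_def by (auto intro: hull_inc)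
  have "convex P" "P \<noteq> {}" using \<open>a \<in> P\<close> unfolding P_def by blast+
  have "x \<notin> rel_interior P"
  proof
    \<comment> \<open>a point of P beyond x on the ray from a would put x in the half-open segment from a\<close>
    assume "x \<in> rel_interior P"
    then obtain e where e: "1 < e" "(1 - e) *\<^sub>R a + e *\<^sub>R x \<in> P"
      using convex_rel_interior_iff[OF \<open>convex P\<close> \<open>P \<noteq> {}\<close>] \<open>a \<in> P\<close> by blast
    have "x = (1 - 1 / e) *\<^sub>R a + (1 / e) *\<^sub>R ((1 - e) *\<^sub>R a + e *\<^sub>R x)"
      using e(1) by (simp add: algebra_simps)
    moreover have "a \<in> convex hull {y\<in>D. f y < f x}" using a x by (auto intro: hull_inc)
    ultimately show False
      using discretely_conic_not_in_half_open_segment[OF dc, of x a _ "1 / e"] e x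
      unfolding P_def by auto
  qed
  then show "x \<in> rel_frontier P" using \<open>x \<in> P\<close> closure_subset by (auto simp: rel_frontier_def)
qed

definition mixing_weights :: "'a::real_vector set \<Rightarrow> 'a set \<Rightarrow> 'a \<Rightarrow> real set" where
  "mixing_weights A B x = {l \<in> {0..1}. \<exists>a\<in>A. \<exists>b\<in>B. x = (1 - l) *\<^sub>R a + l *\<^sub>R b}"

lemma mixing_weights_subset: "mixing_weights A B x \<subseteq> {0..1}"
  by (auto simp: mixing_weights_def)

lemma zero_mixing_weights_iff: "0 \<in> mixing_weights A B x \<longleftrightarrow> x \<in> A \<and> B \<noteq> {}"
  by (auto simp: mixing_weights_def)

lemma one_mixing_weights_iff: "1 \<in> mixing_weights A B x \<longleftrightarrow> x \<in> B \<and> A \<noteq> {}"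
  by (auto simp: mixing_weights_def)

lemma closed_mixing_weights:
  fixes A B :: "'a::real_normed_vector set"
  assumes "compact A" "compact B"
  shows "closed (mixing_weights A B x)"
proof -
  define K where "K = ({0..1::real} \<times> A \<times> B) \<inter> {(l, a, b). (1 - l) *\<^sub>R a + l *\<^sub>R b = x}"
  have "closed {(l, a, b). (1 - l) *\<^sub>R a + l *\<^sub>R b = x}"
    unfolding case_prod_beta' by (intro closed_Collect_eq continuous_intros)
  then have "compact K" unfolding K_def using assms by (intro compact_Int_closed compact_Times) auto
  then have "compact (fst ` K)" by (intro compact_continuous_image continuous_intros)
  moreover have "fst ` K = mixing_weights A B x"
    unfolding K_def mixing_weights_def by (force simp: image_iff)
  ultimately show ?thesis by (metis compact_imp_closed)
qed

lemma Inf_mixing_weights_mem: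
  fixes A B :: "'a::real_normed_vector set"
  assumes "compact A" "compact B" "mixing_weights A B x \<noteq> {}"
  shows "Inf (mixing_weights A B x) \<in> mixing_weights A B x"
  using closed_contains_Inf[OF assms(3) _ closed_mixing_weights[OF assms(1,2)]] mixing_weights_subset
  by (meson atLeastAtMost_iff bdd_below.I subset_iff)

lemma convex_scaleR_add_mem:
  fixes S :: "'a::real_vector set"
  assumes "convex S" "x \<in> S" "y \<in> S" "0 \<le> p" "0 \<le> q"
  shows "\<exists>c\<in>S. p *\<^sub>R x + q *\<^sub>R y = (p + q) *\<^sub>R c"
proof (cases "p + q = 0")
  case True
  then have "p = 0" "q = 0" using assms(4,5) by auto
  then show ?thesis using assms(2) by auto
next
  case False
  then have "0 < p + q" using assms by auto
  then have "(p / (p + q)) *\<^sub>R x + (q / (p + q)) *\<^sub>R y \<in> S"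
    using assms by (intro convexD) (auto simp: add_divide_distrib[symmetric])
  moreover have "p *\<^sub>R x + q *\<^sub>R y = (p + q) *\<^sub>R ((p / (p + q)) *\<^sub>R x + (q / (p + q)) *\<^sub>R y)"
    using \<open>0 < p + q\<close> by (simp add: scaleR_add_right)
  ultimately show ?thesis by blast
qed

lemma mixing_weights_convex_combination:
  assumes "convex A" "convex B" "l \<in> mixing_weights A B w" "m \<in> mixing_weights A B y"
    and "0 \<le> s" "s \<le> 1"
  shows "(1 - s) * l + s * m \<in> mixing_weights A B ((1 - s) *\<^sub>R w + s *\<^sub>R y)"
proof -
  obtain a1 b1 a2 b2 where "a1 \<in> A" "a2 \<in> A" "b1 \<in> B" "b2 \<in> B"
    and w: "w = (1 - l) *\<^sub>R a1 + l *\<^sub>R b1" and y: "y = (1 - m) *\<^sub>R a2 + m *\<^sub>R b2"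
    and lm: "l \<in> {0..1}" "m \<in> {0..1}"
    using assms(3,4) by (auto simp: mixing_weights_def)
  have nonneg: "0 \<le> (1 - s) * (1 - l)" "0 \<le> s * (1 - m)" "0 \<le> (1 - s) * l" "0 \<le> s * m"
    using lm assms(5,6) by auto
  obtain a where a: "a \<in> A" "((1 - s) * (1 - l)) *\<^sub>R a1 + (s * (1 - m)) *\<^sub>R a2
                             = ((1 - s) * (1 - l) + s * (1 - m)) *\<^sub>R a"
    using convex_scaleR_add_mem[OF assms(1) \<open>a1 \<in> A\<close> \<open>a2 \<in> A\<close> nonneg(1,2)] by blast
  obtain b where b: "b \<in> B" "((1 - s) * l) *\<^sub>R b1 + (s * m) *\<^sub>R b2 = ((1 - s) * l + s * m) *\<^sub>R b"
    using convex_scaleR_add_mem[OF assms(2) \<open>b1 \<in> B\<close> \<open>b2 \<in> B\<close> nonneg(3,4)] by blast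
  have "(1 - s) *\<^sub>R w + s *\<^sub>R y
      = (((1 - s) * (1 - l)) *\<^sub>R a1 + (s * (1 - m)) *\<^sub>R a2) + (((1 - s) * l) *\<^sub>R b1 + (s * m) *\<^sub>R b2)"
    by (simp add: w y scaleR_add_right algebra_simps)
  also have "\<dots> = (1 - ((1 - s) * l + s * m)) *\<^sub>R a + ((1 - s) * l + s * m) *\<^sub>R b"
    unfolding a(2) b(2) by (simp add: algebra_simps)
  finally show ?thesis
    using a(1) b(1) lm assms(5,6) unfolding mixing_weights_def
    by (auto intro!: convex_bound_le mult_nonneg_nonneg add_nonneg_nonneg)
qed

lemma Inf_mixing_weights_convex_combination_le:
  fixes A B :: "'a::real_normed_vector set"
  assumes "compact A" "compact B" "convex A" "convex B"
    and "mixing_weights A B w \<noteq> {}" "mixing_weights A B y \<noteq> {}" "0 \<le> s" "s \<le> 1"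
  shows "Inf (mixing_weights A B ((1 - s) *\<^sub>R w + s *\<^sub>R y))
         \<le> (1 - s) * Inf (mixing_weights A B w) + s * Inf (mixing_weights A B y)"
  by (intro cInf_lower mixing_weights_convex_combination Inf_mixing_weights_mem assms
      bdd_belowI[of _ 0]) (use mixing_weights_subset in fastforce)

locale discretely_conic_fun =
  fixes D :: "'a::real_normed_vector set" and f :: "'a \<Rightarrow> real"
  assumes discretely_conic: "discretely_conic D f"
    and finite_sublevels: "\<And>\<alpha>. finite {x\<in>D. f x \<le> \<alpha>}"
begin

definition sublevel_hull :: "real \<Rightarrow> 'a set" where
  "sublevel_hull v = convex hull {x\<in>D. f x \<le> v}"

definition level :: "'a \<Rightarrow> real" where
  "level x = (LEAST v. v \<in> f ` D \<and> x \<in> sublevel_hull v)"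

definition has_lower_value :: "real \<Rightarrow> bool" where
  "has_lower_value \<gamma> \<longleftrightarrow> (\<exists>v\<in>f ` D. v < \<gamma>)"

definition lower_value :: "real \<Rightarrow> real" where
  "lower_value \<gamma> = Max {v\<in>f ` D. v < \<gamma>}"

definition weight :: "real \<Rightarrow> 'a \<Rightarrow> real" where
  "weight \<gamma> x = Inf (mixing_weights (sublevel_hull (lower_value \<gamma>)) (sublevel_hull \<gamma>) x)"

definition extension :: "'a \<Rightarrow> real" where
  "extension x = (if has_lower_value (level x)
     then lower_value (level x) + weight (level x) x * (level x - lower_value (level x))
     else level x)"

lemma sublevel_hull_mono: "v \<le> w \<Longrightarrow> sublevel_hull v \<subseteq> sublevel_hull w"
  unfolding sublevel_hull_def by (intro hull_mono) auto

lemma compact_sublevel_hull: "compact (sublevel_hull v)"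
  unfolding sublevel_hull_def by (intro finite_imp_compact_convex_hull finite_sublevels)

lemma convex_sublevel_hull: "convex (sublevel_hull v)"
  unfolding sublevel_hull_def by simp

lemma mem_sublevel_hull: "x \<in> D \<Longrightarrow> x \<in> sublevel_hull (f x)"
  unfolding sublevel_hull_def by (intro hull_inc) simp

lemma finite_values_le: "finite {v\<in>f ` D. v \<le> \<alpha>}"
  by (rule finite_subset[OF _ finite_imageI[OF finite_sublevels[of \<alpha>]]]) auto

lemma convex_hull_subset_sublevel_hulls: "convex hull D \<subseteq> (\<Union>v\<in>f ` D. sublevel_hull v)"
proof
  fix x assume "x \<in> convex hull D"
  then obtain S u where "finite S" "S \<subseteq> D"
    "\<forall>y\<in>S. 0 \<le> u y" "sum u S = 1" "(\<Sum>y\<in>S. u y *\<^sub>R y) = x"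
    unfolding convex_hull_explicit by blast
  then have S: "finite S" "S \<subseteq> D" "x \<in> convex hull S"
    using convex_hull_finite[of S] by auto
  then have "S \<noteq> {}" by auto
  then have "Max (f ` S) \<in> f ` D" using S(1,2) Max_in[of "f ` S"] by blast
  moreover have "S \<subseteq> {y\<in>D. f y \<le> Max (f ` S)}" using S(1,2) by auto
  then have "x \<in> sublevel_hull (Max (f ` S))"
    unfolding sublevel_hull_def using S(3) hull_mono by blast
  ultimately show "x \<in> (\<Union>v\<in>f ` D. sublevel_hull v)" by blast
qed

lemma level:
  assumes "x \<in> convex hull D"
  shows level_in_values: "level x \<in> f ` D"
    and mem_sublevel_hull_level: "x \<in> sublevel_hull (level x)"
    and level_le: "\<And>v. v \<in> f ` D \<Longrightarrow> x \<in> sublevel_hull v \<Longrightarrow> level x \<le> v"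
proof -
  obtain v0 where v0: "v0 \<in> f ` D" "x \<in> sublevel_hull v0"
    using convex_hull_subset_sublevel_hulls assms by blast
  define M where "M = {v\<in>f ` D. v \<le> v0 \<and> x \<in> sublevel_hull v}"
  have "finite M" by (rule finite_subset[OF _ finite_values_le[of v0]]) (auto simp: M_def)
  moreover have "v0 \<in> M" using v0 by (simp add: M_def)
  ultimately have "Min M \<in> M" "\<And>v. v \<in> M \<Longrightarrow> Min M \<le> v"
    by (metis Min_in empty_iff, simp)
  then have least: "Min M \<le> v" if "v \<in> f ` D" "x \<in> sublevel_hull v" for v
    using that by (cases "v \<le> v0") (auto simp: M_def)
  have "level x = Min M"
    unfolding level_def using \<open>Min M \<in> M\<close> least by (intro Least_equality) (auto simp: M_def)
  then show "level x \<in> f ` D" "x \<in> sublevel_hull (level x)"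
    "\<And>v. v \<in> f ` D \<Longrightarrow> x \<in> sublevel_hull v \<Longrightarrow> level x \<le> v"
    using \<open>Min M \<in> M\<close> least by (auto simp: M_def)
qed

lemma lower_value:
  assumes "has_lower_value \<gamma>"
  shows lower_value_in_values: "lower_value \<gamma> \<in> f ` D"
    and lower_value_less: "lower_value \<gamma> < \<gamma>"
    and le_lower_value: "\<And>v. v \<in> f ` D \<Longrightarrow> v < \<gamma> \<Longrightarrow> v \<le> lower_value \<gamma>"
proof -
  have "finite {v\<in>f ` D. v < \<gamma>}" by (rule finite_subset[OF _ finite_values_le[of \<gamma>]]) auto
  moreover have "{v\<in>f ` D. v < \<gamma>} \<noteq> {}" using assms by (auto simp: has_lower_value_def)
  ultimately show "lower_value \<gamma> \<in> f ` D" "lower_value \<gamma> < \<gamma>"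
    "\<And>v. v \<in> f ` D \<Longrightarrow> v < \<gamma> \<Longrightarrow> v \<le> lower_value \<gamma>"
    using Max_in[of "{v\<in>f ` D. v < \<gamma>}"] by (auto simp: lower_value_def)
qed

lemma level_eq:
  assumes "x \<in> D"
  shows "level x = f x"
proof (rule ccontr)
  have x: "x \<in> convex hull D" using assms by (rule hull_inc)
  assume "level x \<noteq> f x"
  with level_le[OF x] assms have "level x < f x" by (meson mem_sublevel_hull image_eqI order_less_le)
  then have "{y\<in>D. f y \<le> level x} \<subseteq> {y\<in>D. f y < f x}" by auto
  then have "x \<in> convex hull {y\<in>D. f y < f x}"
    using mem_sublevel_hull_level[OF x] hull_mono unfolding sublevel_hull_def by blast
  moreover have "x \<in> convex hull {y\<in>D. f y \<le> f x}" using assms by (intro hull_inc) simp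
  ultimately show False
    using discretely_conic_not_in_half_open_segment[OF discretely_conic assms, of x x 0] by simp
qed

lemma weight_mem:
  assumes "has_lower_value \<gamma>" "x \<in> sublevel_hull \<gamma>"
  shows "weight \<gamma> x \<in> mixing_weights (sublevel_hull (lower_value \<gamma>)) (sublevel_hull \<gamma>) x"
proof -
  obtain d where "d \<in> D" "f d = lower_value \<gamma>" using lower_value_in_values[OF assms(1)] by auto
  then have "sublevel_hull (lower_value \<gamma>) \<noteq> {}" using mem_sublevel_hull by force
  then have "1 \<in> mixing_weights (sublevel_hull (lower_value \<gamma>)) (sublevel_hull \<gamma>) x"
    using assms(2) by (simp add: one_mixing_weights_iff)
  then show ?thesis
    unfolding weight_def by (intro Inf_mixing_weights_mem compact_sublevel_hull) auto
qed

lemma weight_bounds: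
  assumes "has_lower_value \<gamma>" "x \<in> sublevel_hull \<gamma>"
  shows "0 \<le> weight \<gamma> x" "weight \<gamma> x \<le> 1"
  using weight_mem[OF assms] mixing_weights_subset by fastforce+

lemma weight_eq_0:
  assumes "has_lower_value \<gamma>" "x \<in> sublevel_hull (lower_value \<gamma>)"
  shows "weight \<gamma> x = 0"
proof -
  have sub: "sublevel_hull (lower_value \<gamma>) \<subseteq> sublevel_hull \<gamma>"
    using lower_value_less[OF assms(1)] by (intro sublevel_hull_mono) simp
  then have "0 \<in> mixing_weights (sublevel_hull (lower_value \<gamma>)) (sublevel_hull \<gamma>) x"
    using assms(2) by (auto simp: zero_mixing_weights_iff)
  then have "weight \<gamma> x \<le> 0"
    unfolding weight_def by (rule cInf_lower) (use mixing_weights_subset in \<open>fastforce intro: bdd_belowI\<close>)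
  then show ?thesis using weight_bounds(1)[OF assms(1)] sub assms(2) by fastforce
qed

lemma weight_level_pos:
  assumes "x \<in> convex hull D" "has_lower_value (level x)"
  shows "0 < weight (level x) x"
proof (rule ccontr)
  assume "\<not> 0 < weight (level x) x"
  then have "weight (level x) x = 0"
    using weight_bounds(1)[OF assms(2) mem_sublevel_hull_level[OF assms(1)]] by simp
  then have "x \<in> sublevel_hull (lower_value (level x))"
    using weight_mem[OF assms(2) mem_sublevel_hull_level[OF assms(1)]]
    by (simp add: zero_mixing_weights_iff)
  then have "level x \<le> lower_value (level x)"
    using level_le[OF assms(1)] lower_value_in_values[OF assms(2)] by blast
  then show False using lower_value_less[OF assms(2)] by simp
qed

lemma weight_convex_combination_le:
  assumes "has_lower_value \<gamma>" "w \<in> sublevel_hull \<gamma>" "y \<in> sublevel_hull \<gamma>" "0 \<le> s" "s \<le> 1"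
  shows "weight \<gamma> ((1 - s) *\<^sub>R w + s *\<^sub>R y) \<le> (1 - s) * weight \<gamma> w + s * weight \<gamma> y"
  unfolding weight_def
  using weight_mem[OF assms(1,2)] weight_mem[OF assms(1,3)] assms(4,5)
  by (intro Inf_mixing_weights_convex_combination_le compact_sublevel_hull convex_sublevel_hull) auto

lemma weight_eq_1:
  assumes "x \<in> D" "has_lower_value (f x)"
  shows "weight (f x) x = 1"
proof (rule ccontr)
  assume "weight (f x) x \<noteq> 1"
  then have less: "weight (f x) x < 1"
    using weight_bounds(2)[OF assms(2) mem_sublevel_hull[OF assms(1)]] by simp
  obtain a b where ab: "a \<in> sublevel_hull (lower_value (f x))" "b \<in> sublevel_hull (f x)"
    "0 \<le> weight (f x) x" "x = (1 - weight (f x) x) *\<^sub>R a + weight (f x) x *\<^sub>R b"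
    using weight_mem[OF assms(2) mem_sublevel_hull[OF assms(1)]] by (auto simp: mixing_weights_def)
  have "{y\<in>D. f y \<le> lower_value (f x)} \<subseteq> {y\<in>D. f y < f x}"
    using lower_value_less[OF assms(2)] by auto
  then have "a \<in> convex hull {y\<in>D. f y < f x}"
    using ab(1) hull_mono unfolding sublevel_hull_def by blast
  then show False
    using discretely_conic_not_in_half_open_segment[OF discretely_conic assms(1) _ _ ab(3) less] ab(2,4)
    unfolding sublevel_hull_def by blast
qed

lemma extension_eq:
  assumes "x \<in> D"
  shows "extension x = f x"
  using weight_eq_1[OF assms] by (simp add: extension_def level_eq[OF assms])

lemma extension_le_level:
  assumes "x \<in> convex hull D"
  shows "extension x \<le> level x"
proof (cases "has_lower_value (level x)")
  case True
  have "weight (level x) x * (level x - lower_value (level x)) \<le> level x - lower_value (level x)"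
    using weight_bounds(2)[OF True mem_sublevel_hull_level[OF assms]] lower_value_less[OF True]
    by (simp add: mult_left_le_one_le)
  then show ?thesis using True by (simp add: extension_def)
qed (simp add: extension_def)

lemma lower_value_less_extension:
  assumes "x \<in> convex hull D" "has_lower_value (level x)"
  shows "lower_value (level x) < extension x"
  using weight_level_pos[OF assms] lower_value_less[OF assms(2)] assms(2)
  by (simp add: extension_def)

lemma level_le_of_extension_le:
  assumes "x \<in> convex hull D" "y \<in> convex hull D" "extension x \<le> extension y"
  shows "level x \<le> level y"
proof (rule ccontr)
  assume "\<not> level x \<le> level y"
  then have lower: "has_lower_value (level x)"
    using level_in_values[OF assms(2)] unfolding has_lower_value_def by (meson not_le)
  have "level y \<le> lower_value (level x)"
    using le_lower_value[OF lower level_in_values[OF assms(2)]] \<open>\<not> level x \<le> level y\<close> by simp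
  then show False
    using extension_le_level[OF assms(2)] lower_value_less_extension[OF assms(1) lower] assms(3)
    by linarith
qed

lemma weight_less_of_extension_less:
  assumes "u \<in> convex hull D" "z \<in> convex hull D" "has_lower_value (level z)" "level u \<le> level z"
  shows "extension u < extension z \<Longrightarrow> weight (level z) u < weight (level z) z"
    and "extension u \<le> extension z \<Longrightarrow> weight (level z) u \<le> weight (level z) z"
proof -
  let ?\<gamma> = "level z" let ?\<beta> = "lower_value (level z)"
  have gap: "0 < ?\<gamma> - ?\<beta>" using lower_value_less[OF assms(3)] by simp
  have "weight ?\<gamma> u < weight ?\<gamma> z \<or> level u = ?\<gamma>"
  proof (cases "level u = ?\<gamma>")
    case False
    then have "level u \<le> ?\<beta>"
      using le_lower_value[OF assms(3) level_in_values[OF assms(1)]] assms(4) by simp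
    then have "u \<in> sublevel_hull ?\<beta>"
      using mem_sublevel_hull_level[OF assms(1)] sublevel_hull_mono by blast
    then show ?thesis using weight_eq_0[OF assms(3)] weight_level_pos[OF assms(2,3)] by simp
  qed simp
  moreover have "extension u = ?\<beta> + weight ?\<gamma> u * (?\<gamma> - ?\<beta>)" if "level u = ?\<gamma>"
    using that assms(3) by (simp add: extension_def)
  moreover have "extension z = ?\<beta> + weight ?\<gamma> z * (?\<gamma> - ?\<beta>)"
    using assms(3) by (simp add: extension_def)
  ultimately show "extension u < extension z \<Longrightarrow> weight ?\<gamma> u < weight ?\<gamma> z"
    and "extension u \<le> extension z \<Longrightarrow> weight ?\<gamma> u \<le> weight ?\<gamma> z"
    using gap by (auto simp: mult_less_cancel_right mult_le_cancel_right)
qed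

lemma conic_on_extension: "conic_on (convex hull D) extension"
  unfolding conic_on_def
proof (intro ballI allI impI)
  fix y z and t :: real
  assume y: "y \<in> convex hull D" and z: "z \<in> convex hull D"
    and hyps: "0 \<le> t \<and> extension y \<le> extension z \<and> z + t *\<^sub>R (z - y) \<in> convex hull D"
  define w where "w = z + t *\<^sub>R (z - y)"
  from hyps have t: "0 \<le> t" and yz: "extension y \<le> extension z" and w: "w \<in> convex hull D"
    by (auto simp: w_def)
  show "extension z \<le> extension (z + t *\<^sub>R (z - y))"
  proof (rule ccontr)
    assume "\<not> ?thesis"
    then have wz: "extension w < extension z" by (simp add: w_def)
    have "level w \<le> level z" "level y \<le> level z"
      using level_le_of_extension_le[OF w z] level_le_of_extension_le[OF y z] wz yz by auto
    show False
    proof (cases "has_lower_value (level z)")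
      case False
      then have "level w = level z"
        using level_in_values[OF w] \<open>level w \<le> level z\<close> unfolding has_lower_value_def
        by (meson order_less_le)
      then show False using wz False by (simp add: extension_def)
    next
      case True
      let ?\<gamma> = "level z"
      define s where "s = t / (1 + t)"
      have s: "0 \<le> s" "s < 1" using t by (auto simp: s_def)
      have "(1 - s) *\<^sub>R w + s *\<^sub>R y = (1 / (1 + t)) *\<^sub>R (w + t *\<^sub>R y)"
        using t by (simp add: s_def field_simps scaleR_add_right)
      also have "w + t *\<^sub>R y = (1 + t) *\<^sub>R z" by (simp add: w_def algebra_simps)
      finally have z_eq: "z = (1 - s) *\<^sub>R w + s *\<^sub>R y" using t by simp
      have "w \<in> sublevel_hull ?\<gamma>" "y \<in> sublevel_hull ?\<gamma>"
        using mem_sublevel_hull_level[OF w] mem_sublevel_hull_level[OF y] sublevel_hull_mono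
          \<open>level w \<le> level z\<close> \<open>level y \<le> level z\<close> by blast+
      then have "weight ?\<gamma> z \<le> (1 - s) * weight ?\<gamma> w + s * weight ?\<gamma> y"
        using weight_convex_combination_le[OF True _ _ s(1)] s(2) z_eq by simp
      moreover have "(1 - s) * weight ?\<gamma> w < (1 - s) * weight ?\<gamma> z"
        using weight_less_of_extension_less(1)[OF w z True \<open>level w \<le> level z\<close> wz] s by simp
      moreover have "s * weight ?\<gamma> y \<le> s * weight ?\<gamma> z"
        using weight_less_of_extension_less(2)[OF y z True \<open>level y \<le> level z\<close> yz] s
        by (simp add: mult_left_mono)
      ultimately show False by (simp add: algebra_simps)
    qed
  qed
qed

end


theorem mainTheorem5:
  fixes D :: "(real ^ 'n) set" and f :: "real ^ 'n \<Rightarrow> real"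
  assumes "discrete_set D"
    and "discretely_conic D f"
    and "\<And>\<alpha>::real. finite {x\<in>D. f x \<le> \<alpha>}"
  shows "(\<exists>g. conic_on (convex hull D) g \<and> (\<forall>x\<in>D. g x = f x)) \<longleftrightarrow>
         (\<forall>z\<in>D - MIN1 D f.
            {x\<in>D. f x = f z} \<subseteq> rel_frontier (convex hull {x\<in>D. f x \<le> f z}))"
proof -
  interpret discretely_conic_fun D f
    using assms(2,3) by unfold_locales
  have "conic_on (convex hull D) extension \<and> (\<forall>x\<in>D. extension x = f x)"
    using conic_on_extension extension_eq by blast
  moreover have "\<forall>z\<in>D - MIN1 D f.
      {x\<in>D. f x = f z} \<subseteq> rel_frontier (convex hull {x\<in>D. f x \<le> f z})"
    using discretely_conic_level_set_subset_rel_frontier[OF assms(2)] by blast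
  ultimately show ?thesis by blast
qed

end
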